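(* Let $(X,d)$ be a metric space, let $u,u_1,u_2,\ldots\in F_{USC}(X)$ and let $P$ be a dense subset of $[0,1]$. If $H([u_n]_\alpha,[u]_\alpha)\to0$ for each $\alpha\in P$, then $H_{\rm end}(u_n,u)\to0$.
   Context: A fuzzy set on $X$ is a function $u:X\to[0,1]$, with $\alpha$-cuts $[u]_\alpha=\{x: u(x)\ge\alpha\}$ for $\alpha\in(0,1]$ and $[u]_0=\overline{\{u>0\}}$. $F_{USC}(X)$ is the set of fuzzy sets with all $\alpha$-cuts ($\alpha\in[0,1]$) non-empty and closed. For non-empty closed sets $U,V$ in a metric space $(Y,\rho)$, $H(U,V)=\max\{\sup_{a\in U}\inf_{b\in V}\rho(a,b),\sup_{b\in V}\inf_{a\in U}\rho(a,b)\}$ (Hausdorff distance). $X\times[0,1]$ is metrized by $\overline{d}((x,\alpha),(y,\beta))=d(x,y)+|\alpha-\beta|$, ${\rm end}\,u=\{(x,t)\in X\times[0,1]: u(x)\ge t\}$, and $H_{\rm end}(u,v)=H({\rm end}\,u,{\rm end}\,v)$ computed with $\overline{d}$. *)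

theory Defs
  imports "HOL-Analysis.Analysis" "HOL-Library.Extended_Real"
begin

definition cut :: "('a::topological_space \<Rightarrow> real) \<Rightarrow> real \<Rightarrow> 'a set" where
  "cut u \<alpha> = (if \<alpha> = 0 then closure {x. u x > 0} else {x. u x \<ge> \<alpha>})"

definition F_USC :: "('a::topological_space \<Rightarrow> real) set" where
  "F_USC = {u. (\<forall>x. 0 \<le> u x \<and> u x \<le> 1) \<and>
               (\<forall>\<alpha>\<in>{0..1}. cut u \<alpha> \<noteq> {} \<and> closed (cut u \<alpha>))}"

text \<open>Hausdorff distance w.r.t. a metric rho, valued in the extended reals
  (it may be infinite for unbounded closed sets).\<close>
definition Hd :: "('b \<Rightarrow> 'b \<Rightarrow> real) \<Rightarrow> 'b set \<Rightarrow> 'b set \<Rightarrow> ereal" where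
  "Hd \<rho> U V = max (SUP a\<in>U. INF b\<in>V. ereal (\<rho> a b)) (SUP b\<in>V. INF a\<in>U. ereal (\<rho> a b))"

definition dbar :: "('a::metric_space \<times> real) \<Rightarrow> ('a \<times> real) \<Rightarrow> real" where
  "dbar p q = dist (fst p) (fst q) + \<bar>snd p - snd q\<bar>"

definition endo :: "('a \<Rightarrow> real) \<Rightarrow> ('a \<times> real) set" where
  "endo u = {(x, t). t \<in> {0..1} \<and> u x \<ge> t}"

definition H_end :: "('a::metric_space \<Rightarrow> real) \<Rightarrow> ('a \<Rightarrow> real) \<Rightarrow> ereal" where
  "H_end u v = Hd dbar (endo u) (endo v)"

end

theory Submission
  imports Defs
begin

text \<open>Density of \<open>P\<close> and compactness of \<open>[\<epsilon>, 1]\<close> give finitely many levels \<open>p \<in> P\<close> such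
  that every \<open>t \<ge> \<epsilon>\<close> lies in some \<open>[p, p + \<epsilon>)\<close>. If \<open>(x, t)\<close> is in one endograph, then \<open>x\<close> is in
  its \<open>p\<close>-cut; once the \<open>p\<close>-cuts of \<open>u\<^sub>n\<close> and \<open>u\<close> are \<open>\<epsilon>\<close>-close for these finitely many \<open>p\<close>,
  some \<open>(y, p)\<close> of the other endograph is \<open>2\<epsilon>\<close>-close to \<open>(x, t)\<close>. Points with \<open>t < \<epsilon>\<close> are
  \<open>\<epsilon>\<close>-close to \<open>(x, 0)\<close>, which lies in every endograph.\<close>

lemma Hd_less_ereal_left:
  assumes "Hd \<rho> U V < ereal e" "a \<in> U"
  shows "\<exists>b\<in>V. \<rho> a b < e"
proof -
  have "(INF b\<in>V. ereal (\<rho> a b)) \<le> Hd \<rho> U V"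
    unfolding Hd_def using assms(2) by (intro max.coboundedI1 SUP_upper)
  also note assms(1)
  finally show ?thesis
    by (simp add: INF_less_iff)
qed

lemma Hd_less_ereal_right:
  assumes "Hd \<rho> U V < ereal e" "b \<in> V"
  shows "\<exists>a\<in>U. \<rho> a b < e"
proof -
  have "(INF a\<in>U. ereal (\<rho> a b)) \<le> Hd \<rho> U V"
    unfolding Hd_def using assms(2) by (intro max.coboundedI2 SUP_upper)
  also note assms(1)
  finally show ?thesis
    by (simp add: INF_less_iff)
qed

lemma Hd_le_ereal:
  assumes "\<forall>a\<in>U. \<exists>b\<in>V. \<rho> a b \<le> e" "\<forall>b\<in>V. \<exists>a\<in>U. \<rho> a b \<le> e"
  shows "Hd \<rho> U V \<le> ereal e"
  unfolding Hd_def
proof (rule max.boundedI; rule SUP_least)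
  show "(INF b\<in>V. ereal (\<rho> a b)) \<le> ereal e" if "a \<in> U" for a
    using assms(1) that by (force intro: INF_lower2)
  show "(INF a\<in>U. ereal (\<rho> a b)) \<le> ereal e" if "b \<in> V" for b
    using assms(2) that by (force intro: INF_lower2)
qed

lemma Hd_nonneg:
  assumes "\<And>a b. 0 \<le> \<rho> a b" "U \<noteq> {}"
  shows "0 \<le> Hd \<rho> U V"
proof -
  obtain a where "a \<in> U" using assms(2) by blast
  have "0 \<le> (INF b\<in>V. ereal (\<rho> a b))"
    using assms(1) by (simp add: INF_greatest)
  also have "\<dots> \<le> Hd \<rho> U V"
    unfolding Hd_def using \<open>a \<in> U\<close> by (intro max.coboundedI1 SUP_upper)
  finally show ?thesis .
qed

lemma ereal_tendsto_zeroI: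
  fixes f :: "'b \<Rightarrow> ereal"
  assumes "\<And>x. 0 \<le> f x" "\<And>e. 0 < e \<Longrightarrow> \<forall>\<^sub>F x in F. f x \<le> ereal e"
  shows "(f \<longlongrightarrow> 0) F"
proof (rule order_tendstoI)
  show "\<forall>\<^sub>F x in F. a < f x" if "a < 0" for a
    using assms(1) that by (auto intro: always_eventually order_less_le_trans)
  show "\<forall>\<^sub>F x in F. f x < a" if "0 < a" for a
  proof -
    obtain e where "0 < ereal e" "ereal e < a"
      using \<open>0 < a\<close> ereal_dense2 by blast
    then show ?thesis
      using assms(2)[of e] by (auto elim: eventually_mono)
  qed
qed

lemma finite_levels_below_dense:
  fixes P :: "real set"
  assumes "{0..1} \<subseteq> closure P" "0 < \<epsilon>"
  obtains S where "finite S" "S \<subseteq> P"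
    "\<forall>t\<in>{0..1}. t < \<epsilon> \<or> (\<exists>p\<in>S. 0 < p \<and> p \<le> t \<and> t < p + \<epsilon>)"
proof -
  have cover: "{\<epsilon>..1} \<subseteq> (\<Union>p\<in>{p\<in>P. 0 < p}. {p<..<p + \<epsilon>})"
  proof
    fix t assume t: "t \<in> {\<epsilon>..1}"
    have "{t - \<epsilon><..<t} \<subseteq> {0..1}"
      using t by auto
    then have "{t - \<epsilon><..<t} \<inter> closure P = {t - \<epsilon><..<t}"
      using assms(1) by blast
    then have "{t - \<epsilon><..<t} \<inter> P \<noteq> {}"
      using \<open>0 < \<epsilon>\<close> by (simp add: open_Int_closure_eq_empty [symmetric])
    then obtain p where "p \<in> P" "t - \<epsilon> < p" "p < t"
      by auto
    moreover have "0 < p"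
      using t \<open>t - \<epsilon> < p\<close> by simp
    ultimately show "t \<in> (\<Union>p\<in>{p\<in>P. 0 < p}. {p<..<p + \<epsilon>})"
      by (intro UN_I[of p]) auto
  qed
  obtain S where S: "S \<subseteq> {p\<in>P. 0 < p}" "finite S"
    and S_cover: "{\<epsilon>..1} \<subseteq> (\<Union>p\<in>S. {p<..<p + \<epsilon>})"
    by (rule compactE_image[OF compact_Icc _ cover]) auto
  have "t < \<epsilon> \<or> (\<exists>p\<in>S. 0 < p \<and> p \<le> t \<and> t < p + \<epsilon>)" if "t \<in> {0..1}" for t
  proof (cases "t < \<epsilon>")
    case False
    with that have "t \<in> {\<epsilon>..1}"
      by simp
    then have "t \<in> (\<Union>p\<in>S. {p<..<p + \<epsilon>})"
      using S_cover by blast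
    then obtain p where "p \<in> S" "p < t" "t < p + \<epsilon>"
      by auto
    moreover have "0 < p"
      using S(1) \<open>p \<in> S\<close> by blast
    ultimately show ?thesis
      by auto
  qed simp
  then show ?thesis
    using S that by blast
qed

lemma in_endo_zero: "\<forall>x. 0 \<le> v x \<Longrightarrow> (x, 0) \<in> endo v"
  by (simp add: endo_def)

lemma endo_approx_by_cuts:
  fixes v w :: "'a::metric_space \<Rightarrow> real"
  assumes levels: "\<forall>t\<in>{0..1}. t < \<epsilon> \<or> (\<exists>p\<in>S. 0 < p \<and> p \<le> t \<and> t < p + \<epsilon>)"
    and cuts_close: "\<forall>p\<in>S. \<forall>x\<in>cut v p. \<exists>y\<in>cut w p. dist x y < \<epsilon>"
    and "\<forall>x. 0 \<le> w x"
  shows "\<forall>a\<in>endo v. \<exists>b\<in>endo w. dbar a b \<le> 2 * \<epsilon>"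
proof (clarify)
  fix x t assume "(x, t) \<in> endo v"
  then have t: "t \<in> {0..1}" "t \<le> v x"
    by (auto simp: endo_def)
  consider "t < \<epsilon>" | p where "p \<in> S" "0 < p" "p \<le> t" "t < p + \<epsilon>"
    using bspec[OF levels t(1)] by auto
  then show "\<exists>b\<in>endo w. dbar (x, t) b \<le> 2 * \<epsilon>"
  proof cases
    case 1
    then have "dbar (x, t) (x, 0) \<le> 2 * \<epsilon>"
      using t by (simp add: dbar_def)
    then show ?thesis
      using in_endo_zero[OF \<open>\<forall>x. 0 \<le> w x\<close>] by blast
  next
    case 2
    then have "x \<in> cut v p"
      using t by (simp add: cut_def)
    then obtain y where "y \<in> cut w p" "dist x y < \<epsilon>"
      using cuts_close \<open>p \<in> S\<close> by blast
    moreover have "(y, p) \<in> endo w"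
      using \<open>y \<in> cut w p\<close> 2 t by (simp add: cut_def endo_def)
    moreover have "dbar (x, t) (y, p) \<le> 2 * \<epsilon>"
      using \<open>dist x y < \<epsilon>\<close> 2 by (simp add: dbar_def)
    ultimately show ?thesis
      by blast
  qed
qed

lemma dbar_commute: "dbar a b = dbar b a"
  by (simp add: dbar_def dist_commute abs_minus_commute)

lemma H_end_le_if_cuts_close:
  fixes v w :: "'a::metric_space \<Rightarrow> real"
  assumes "\<forall>x. 0 \<le> v x" "\<forall>x. 0 \<le> w x"
    and levels: "\<forall>t\<in>{0..1}. t < \<epsilon> \<or> (\<exists>p\<in>S. 0 < p \<and> p \<le> t \<and> t < p + \<epsilon>)"
    and Hd_cuts: "\<forall>p\<in>S. Hd dist (cut v p) (cut w p) < ereal \<epsilon>"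
  shows "H_end v w \<le> ereal (2 * \<epsilon>)"
  unfolding H_end_def
proof (rule Hd_le_ereal)
  have "\<forall>p\<in>S. \<forall>x\<in>cut v p. \<exists>y\<in>cut w p. dist x y < \<epsilon>"
    using Hd_cuts by (blast intro: Hd_less_ereal_left)
  from endo_approx_by_cuts[OF levels this \<open>\<forall>x. 0 \<le> w x\<close>]
  show "\<forall>a\<in>endo v. \<exists>b\<in>endo w. dbar a b \<le> 2 * \<epsilon>" .
  have "\<forall>p\<in>S. \<forall>y\<in>cut w p. \<exists>x\<in>cut v p. dist y x < \<epsilon>"
  proof (intro ballI)
    fix p y assume "p \<in> S" "y \<in> cut w p"
    then show "\<exists>x\<in>cut v p. dist y x < \<epsilon>"
      using Hd_less_ereal_right[of dist "cut v p" "cut w p" \<epsilon> y] Hd_cuts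
      by (simp add: dist_commute)
  qed
  note wv = endo_approx_by_cuts[OF levels this \<open>\<forall>x. 0 \<le> v x\<close>]
  show "\<forall>b\<in>endo w. \<exists>a\<in>endo v. dbar a b \<le> 2 * \<epsilon>"
  proof
    fix b assume "b \<in> endo w"
    then obtain a where "a \<in> endo v" "dbar b a \<le> 2 * \<epsilon>"
      using wv by blast
    then show "\<exists>a\<in>endo v. dbar a b \<le> 2 * \<epsilon>"
      using dbar_commute[of a b] by (intro bexI[of _ a]) simp_all
  qed
qed

lemma H_end_nonneg:
  assumes "\<forall>x. 0 \<le> v x"
  shows "0 \<le> H_end v w"
proof -
  have "endo v \<noteq> {}"
    using in_endo_zero[OF assms] by blast
  then show ?thesis
    unfolding H_end_def by (intro Hd_nonneg) (simp_all add: dbar_def)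
qed

theorem theorem4p3:
  fixes u :: "'a::metric_space \<Rightarrow> real" and us :: "nat \<Rightarrow> 'a \<Rightarrow> real" and P :: "real set"
  assumes "u \<in> F_USC" and "\<And>n. us n \<in> F_USC"
    and "P \<subseteq> {0..1}" and "{0..1} \<subseteq> closure P"
    and "\<And>\<alpha>. \<alpha> \<in> P \<Longrightarrow> (\<lambda>n. Hd dist (cut (us n) \<alpha>) (cut u \<alpha>)) \<longlonglongrightarrow> 0"
  shows "(\<lambda>n. H_end (us n) u) \<longlonglongrightarrow> 0"
proof (rule ereal_tendsto_zeroI)
  have u_nonneg: "\<forall>x. 0 \<le> u x" and us_nonneg: "\<And>n. \<forall>x. 0 \<le> us n x"
    using assms(1,2) by (simp_all add: F_USC_def)
  show "0 \<le> H_end (us n) u" for n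
    using us_nonneg by (rule H_end_nonneg)
  fix \<epsilon> :: real assume "0 < \<epsilon>"
  then obtain S where "finite S" "S \<subseteq> P"
    and levels: "\<forall>t\<in>{0..1}. t < \<epsilon>/2 \<or> (\<exists>p\<in>S. 0 < p \<and> p \<le> t \<and> t < p + \<epsilon>/2)"
    using finite_levels_below_dense[OF assms(4), of "\<epsilon>/2"] by auto
  have "\<forall>p\<in>S. \<forall>\<^sub>F n in sequentially. Hd dist (cut (us n) p) (cut u p) < ereal (\<epsilon>/2)"
    using assms(5) \<open>S \<subseteq> P\<close> \<open>0 < \<epsilon>\<close> order_tendstoD(2)[of _ 0 sequentially "ereal (\<epsilon>/2)"]
    by (simp add: subset_eq)
  then have "\<forall>\<^sub>F n in sequentially. \<forall>p\<in>S. Hd dist (cut (us n) p) (cut u p) < ereal (\<epsilon>/2)"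
    by (rule eventually_ball_finite[OF \<open>finite S\<close>])
  then show "\<forall>\<^sub>F n in sequentially. H_end (us n) u \<le> ereal \<epsilon>"
    by (rule eventually_mono) (use H_end_le_if_cuts_close[OF us_nonneg u_nonneg levels] in simp)
qed

end
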